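(* Let $\mathbf{f}$ be the Fibonacci sequence, fixed point of the substitution $0\mapsto01$, $1\mapsto0$. For each $k\ge2$, the smallest integer $C_k\ge1$ such that $\mathbf{f}$ is $(k,C_k)$-balanced is $C_k=2$.
   Context: For positive integers $k,C$, a sequence $\mathbf{x}$ over alphabet $A$ is $(k,C)$-balanced if for all factors $u,v$ of $\mathbf{x}$ with $|u|=|v|$ and every $w\in A^k$, $||u|_w-|v|_w|\le C$, where $|u|_w$ is the number of (possibly overlapping) occurrences of $w$ in $u$. *)

theory Defs
  imports Main
begin

definition occ :: "'a list \<Rightarrow> 'a list \<Rightarrow> nat" where
  "occ w u = card {j. j + length w \<le> length u \<and> take (length w) (drop j u) = w}"

definition factor :: "(nat \<Rightarrow> 'a) \<Rightarrow> nat \<Rightarrow> nat \<Rightarrow> 'a list" where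
  "factor x i n = map x [i..<i+n]"

definition balanced :: "'a set \<Rightarrow> (nat \<Rightarrow> 'a) \<Rightarrow> nat \<Rightarrow> nat \<Rightarrow> bool" where
  "balanced A x k C \<longleftrightarrow>
     (\<forall>i j n w. length w = k \<and> set w \<subseteq> A \<longrightarrow>
        \<bar>int (occ w (factor x i n)) - int (occ w (factor x j n))\<bar> \<le> int C)"

fun fib_sub :: "nat \<Rightarrow> nat list" where
  "fib_sub a = (if a = 0 then [0, 1] else [0])"

definition fib_apply :: "nat list \<Rightarrow> nat list" where
  "fib_apply u = concat (map fib_sub u)"

definition fib_iter :: "nat \<Rightarrow> nat list" where
  "fib_iter n = (fib_apply ^^ n) [0]"

text \<open>The Fibonacci word: the fixed point of the substitution, i.e. the limit of phi^n(0).
  Since phi^n(0) is a prefix of phi^(n+1)(0) and has length at least n+1, letter i is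
  read off phi^(i+1)(0) (any later iterate gives the same letter).\<close>
definition fib_word :: "nat \<Rightarrow> nat" where
  "fib_word i = fib_iter (Suc i) ! i"

end

theory Submission
  imports Defs "HOL-Number_Theory.Fib" "HOL-Number_Theory.Cong"
begin

(* Let \<beta> = 1/\<phi> and \<alpha> = \<beta>\<^sup>2 = 2 - \<phi>. The Fibonacci word is the Sturmian word coding the
   rotation by \<alpha>: its letter at p is 1 iff frac ((p + 2)\<alpha>) < \<alpha>. Hence a word of length k occurs
   at p iff frac ((p + 1)\<alpha>) lies in a fixed arc [-a\<alpha>, -b\<alpha>) between two consecutive points of
   {-s\<alpha> | s \<le> k} on the circle. Because the Fibonacci numbers are the best approximation
   denominators of \<alpha> (dist (j\<alpha>, \<int>) \<ge> \<beta>\<^sup>n\<^sup>+\<^sup>1 for 0 < j < F(n+3), j \<noteq> F(n+2)), the gap |a - b| is a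
   Fibonacci number q. The number of occurrences in a window is then a sum of differences
   \<lfloor>x\<alpha>\<rfloor> - \<lfloor>(x + q)\<alpha>\<rfloor>, which telescopes into sums of q consecutive terms \<lfloor>z + j\<alpha>\<rfloor>. As q\<alpha> is
   within a power of \<beta> of an integer coprime to q, Hermite's identity shows that such a sum stays within
   less than 3/2 of a value affine in z, so counts in windows of equal length differ by at most 2.
   For the lower bound take n odd with F(n+2) \<le> k < F(n+4): then [0, \<beta>\<^sup>n\<^sup>+\<^sup>2) is one of these arcs,
   the window starting at F(n+5) - 1 hits it twice and the window starting at F(n+3) never. *)

(* Keeps indices such as fib (n + 2) and \<beta> ^ (n + 2) from being rewritten to Suc (Suc n). *)
declare add_2_eq_Suc' [simp del]

section \<open>The constants \<alpha> and \<beta>\<close>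

definition \<beta> :: real where "\<beta> = (sqrt 5 - 1) / 2"
definition \<alpha> :: real where "\<alpha> = 1 - \<beta>"

lemma sqrt5_bounds: "2.236 < sqrt 5" "sqrt 5 < 2.2361"
proof -
  show "2.236 < sqrt 5" by (rule real_less_rsqrt) (simp add: power2_eq_square)
  have "sqrt 5 < sqrt (2.2361^2)" by (subst real_sqrt_less_iff) (simp add: power2_eq_square)
  then show "sqrt 5 < 2.2361" by simp
qed

lemma beta_pos: "0 < \<beta>" and beta_less_1: "\<beta> < 1"
  using sqrt5_bounds by (auto simp: \<beta>_def)

lemma beta_square: "\<beta>\<^sup>2 = 1 - \<beta>"
  by (simp add: \<beta>_def power2_eq_square field_simps)

lemma alpha_eq_beta_square: "\<alpha> = \<beta>\<^sup>2"
  by (simp add: \<alpha>_def beta_square)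

lemma alpha_bounds: "0.38 < \<alpha>" "\<alpha> < 0.382"
  using sqrt5_bounds by (auto simp: \<alpha>_def \<beta>_def)

lemma beta_power_pos: "0 < \<beta> ^ n"
  using beta_pos by simp

lemma beta_power_less_1: "0 < n \<Longrightarrow> \<beta> ^ n < 1"
  using beta_pos beta_less_1 by (simp add: power_less_one_iff)

lemma beta_power_decreasing: "m \<le> n \<Longrightarrow> \<beta> ^ n \<le> \<beta> ^ m"
  using beta_pos beta_less_1 by (simp add: power_decreasing)

lemma beta_power_strict_decreasing: "m < n \<Longrightarrow> \<beta> ^ n < \<beta> ^ m"
  using beta_pos beta_less_1 by (simp add: power_strict_decreasing)

lemma beta_power_add_2: "\<beta> ^ (n + 2) = \<beta> ^ n - \<beta> ^ (n + 1)"
proof -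
  have "\<beta> ^ (n + 2) = \<beta> ^ n * \<beta>\<^sup>2" by (rule power_add)
  then show ?thesis by (simp add: beta_square algebra_simps)
qed

section \<open>Fibonacci numbers as best approximation denominators of \<alpha>\<close>

lemma le_fib_Suc: "n \<le> fib (Suc n)"
proof (induction n rule: fib.induct)
  case (3 n)
  have "0 < fib (Suc n)" by (simp add: fib_neq_0_nat)
  with 3 show ?case by simp
qed simp_all

lemma fib_add_3: "fib (n + 3) = fib (n + 2) + fib (n + 1)"
proof -
  have "n + 3 = (n + 1) + 2" "n + 2 = (n + 1) + 1" by simp_all
  then show ?thesis by (simp only: fib_plus_2)
qed

lemma fib_add_4: "fib (n + 4) = fib (n + 3) + fib (n + 2)"
proof -
  have "n + 4 = (n + 2) + 2" "n + 3 = (n + 2) + 1" by simp_all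
  then show ?thesis by (simp only: fib_plus_2)
qed

lemma fib_bracket:
  assumes "0 < q"
  obtains n where "fib (n + 2) \<le> q" "q < fib (n + 3)"
proof -
  have "q < fib (q + 3)" using le_fib_Suc[of "q + 2"] by (simp add: numeral_eq_Suc)
  define n where "n = (LEAST n. q < fib (n + 3))"
  have "q < fib (n + 3)" unfolding n_def by (rule LeastI) fact
  moreover have "fib (n + 2) \<le> q"
  proof (cases n)
    case 0
    then show ?thesis using assms by simp
  next
    case (Suc m)
    then have "\<not> q < fib (m + 3)" using not_less_Least[of m "\<lambda>n. q < fib (n + 3)"] n_def by simp
    then show ?thesis using Suc by (simp add: numeral_eq_Suc)
  qed
  ultimately show ?thesis using that by blast
qed

lemma fib_times_alpha: "real (fib (n + 2)) * \<alpha> = real (fib n) + (-\<beta>) ^ (n + 2)"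
proof (induction n rule: fib.induct)
  case 1
  show ?case by (simp add: alpha_eq_beta_square power2_eq_square)
next
  case 2
  have "fib 3 = 2" by (simp add: numeral_3_eq_3)
  moreover have "(-\<beta>) ^ 3 = 1 - 2 * \<beta>"
  proof -
    have "(-\<beta>) ^ 3 = - \<beta> * \<beta>\<^sup>2" by (simp add: power2_eq_square power3_eq_cube)
    also have "\<dots> = - \<beta> * (1 - \<beta>)" by (simp only: beta_square)
    also have "\<dots> = \<beta>\<^sup>2 - \<beta>" by (simp add: power2_eq_square algebra_simps)
    finally show ?thesis by (simp add: beta_square)
  qed
  moreover have "Suc 0 + 2 = 3" by simp
  ultimately show ?case by (simp add: \<alpha>_def power3_eq_cube mult.assoc)
next
  case (3 n)
  have "n + 4 = (n + 2) + 2" by simp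
  then have "(-\<beta>) ^ (n + 4) = (-\<beta>) ^ (n + 2) * \<beta>\<^sup>2"
    by (simp only: power_add power2_minus)
  also have "\<dots> = (-\<beta>) ^ (n + 2) * (-\<beta>) + (-\<beta>) ^ (n + 2)"
    by (simp add: beta_square algebra_simps)
  finally have "(-\<beta>) ^ (n + 4) = (-\<beta>) ^ (n + 3) + (-\<beta>) ^ (n + 2)"
    by (simp add: numeral_eq_Suc)
  then show ?case
    using "3.IH" fib_add_4[of n] fib_plus_2[of n] by (simp add: algebra_simps numeral_eq_Suc)
qed

lemma frac_fib_times_alpha:
  "frac (real (fib (n + 2)) * \<alpha>) = (if even n then \<beta> ^ (n + 2) else 1 - \<beta> ^ (n + 2))"
proof -
  have "0 < \<beta> ^ (n + 2)" "\<beta> ^ (n + 2) < 1"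
    using beta_power_pos[of "n + 2"] beta_power_less_1[of "n + 2"] by auto
  then show ?thesis
    by (auto simp: fib_times_alpha frac_unique_iff)
qed

definition dist_int :: "real \<Rightarrow> real" where
  "dist_int x = min (frac x) (1 - frac x)"

lemma le_dist_int_iff: "d \<le> dist_int x \<longleftrightarrow> d \<le> frac x \<and> frac x \<le> 1 - d"
  by (auto simp: dist_int_def)

lemma dist_int_add_of_nat [simp]: "dist_int (x + of_nat n) = dist_int x"
  by (simp add: dist_int_def frac_add_int_right)

lemma frac_add_small:
  assumes "\<bar>e\<bar> < dist_int x"
  shows "frac (x + e) = frac x + e"
proof -
  have "0 \<le> frac x + e" "frac x + e < 1" using assms by (auto simp: dist_int_def)
  moreover have "x + e - (frac x + e) \<in> \<int>" by (simp add: frac_def)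
  ultimately show ?thesis by (simp add: frac_unique_iff)
qed

lemma floor_add_small:
  assumes "\<bar>e\<bar> < dist_int x"
  shows "\<lfloor>x + e\<rfloor> = \<lfloor>x\<rfloor>"
proof -
  have "x + e - \<lfloor>x + e\<rfloor> = x - \<lfloor>x\<rfloor> + e"
    using frac_add_small[OF assms] by (simp add: frac_def)
  then show ?thesis by simp
qed

lemma dist_int_add_small:
  assumes "\<bar>e\<bar> < dist_int x"
  shows "dist_int x - \<bar>e\<bar> \<le> dist_int (x + e)"
  using frac_add_small[OF assms] by (auto simp: dist_int_def abs_if)

lemma dist_int_fib_times_alpha: "dist_int (real (fib (n + 2)) * \<alpha>) = \<beta> ^ (n + 2)"
proof -
  have "\<beta> ^ (n + 2) \<le> \<beta>\<^sup>2" by (rule beta_power_decreasing) simp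
  then have "\<beta> ^ (n + 2) \<le> 1 - \<beta> ^ (n + 2)"
    using alpha_bounds by (simp add: alpha_eq_beta_square[symmetric])
  then show ?thesis unfolding dist_int_def frac_fib_times_alpha by simp
qed

lemma dist_int_add_fib_times_alpha:
  assumes "\<beta> ^ (n + 1) \<le> dist_int (real r * \<alpha>)"
  shows "\<beta> ^ (n + 2) \<le> dist_int (real (r + fib (n + 3)) * \<alpha>)"
proof -
  define e where "e = (-\<beta>) ^ (n + 3)"
  have e: "\<bar>e\<bar> = \<beta> ^ (n + 3)" using beta_pos by (simp add: e_def power_abs)
  have gap: "\<beta> ^ (n + 1) - \<beta> ^ (n + 3) = \<beta> ^ (n + 2)"
    using beta_power_add_2[of "n + 1"] by (simp add: numeral_eq_Suc)
  then have small: "\<bar>e\<bar> < dist_int (real r * \<alpha>)"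
    using e assms beta_power_pos[of "n + 2"] by linarith
  have "real (r + fib (n + 3)) * \<alpha> = (real r * \<alpha> + e) + real (fib (n + 1))"
    using fib_times_alpha[of "n + 1"] by (simp add: e_def algebra_simps)
  then have "dist_int (real (r + fib (n + 3)) * \<alpha>) = dist_int (real r * \<alpha> + e)"
    by simp
  moreover have "dist_int (real r * \<alpha>) - \<bar>e\<bar> \<le> dist_int (real r * \<alpha> + e)"
    by (rule dist_int_add_small[OF small])
  ultimately show ?thesis using assms e gap by linarith
qed

lemma dist_int_times_alpha_lower_bound:
  assumes "0 < j" "j < fib (n + 3)" "j \<noteq> fib (n + 2)"
  shows "\<beta> ^ (n + 1) \<le> dist_int (real j * \<alpha>)"
  using assms
proof (induction n arbitrary: j)
  case 0
  then show ?case by (simp add: numeral_eq_Suc)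
next
  case (Suc n)
  have "\<beta> ^ (n + 2) \<le> dist_int (real j * \<alpha>)"
  proof (cases "j < fib (n + 3)")
    case True
    show ?thesis
    proof (cases "j = fib (n + 2)")
      case True
      then show ?thesis using dist_int_fib_times_alpha[of n] by simp
    next
      case False
      with Suc.IH Suc.prems(1) \<open>j < fib (n + 3)\<close> have "\<beta> ^ (n + 1) \<le> dist_int (real j * \<alpha>)" by blast
      moreover have "\<beta> ^ (n + 2) \<le> \<beta> ^ (n + 1)" by (rule beta_power_decreasing) simp
      ultimately show ?thesis by linarith
    qed
  next
    case False
    define r where "r = j - fib (n + 3)"
    have "fib (n + 3) < j" using False Suc.prems(3) by (simp add: numeral_eq_Suc)
    moreover have "fib (Suc n + 3) = fib (n + 3) + fib (n + 2)" by (simp add: numeral_eq_Suc)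
    ultimately have "0 < r" "r < fib (n + 2)" using Suc.prems(2) by (auto simp: r_def)
    moreover have "fib (n + 2) \<le> fib (n + 3)" by (rule fib_mono) simp
    ultimately have "\<beta> ^ (n + 1) \<le> dist_int (real r * \<alpha>)" using Suc.IH by simp
    moreover have "j = r + fib (n + 3)" using \<open>fib (n + 3) < j\<close> by (simp add: r_def)
    ultimately show ?thesis using dist_int_add_fib_times_alpha by simp
  qed
  then show ?case by (simp add: add_2_eq_Suc')
qed

lemma frac_times_alpha_pos:
  assumes "0 < j"
  shows "0 < frac (real j * \<alpha>)"
proof -
  have "j + 2 \<le> fib (Suc (j + 2))" by (rule le_fib_Suc)
  then have "j < fib (j + 3)" by (simp add: numeral_3_eq_3)
  then show ?thesis
  proof (cases "j = fib (j + 2)")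
    case True
    then show ?thesis using beta_power_pos by (metis dist_int_fib_times_alpha dist_int_def min_less_iff_conj)
  next
    case False
    then have "\<beta> ^ (j + 1) \<le> dist_int (real j * \<alpha>)"
      using dist_int_times_alpha_lower_bound assms \<open>j < fib (j + 3)\<close> by blast
    then show ?thesis using beta_power_pos[of "j + 1"] unfolding le_dist_int_iff by linarith
  qed
qed

lemma int_times_alpha_not_Int:
  assumes "j \<noteq> 0"
  shows "real_of_int j * \<alpha> \<notin> \<int>"
proof -
  have "real (nat \<bar>j\<bar>) * \<alpha> \<notin> \<int>"
    using frac_times_alpha_pos[of "nat \<bar>j\<bar>"] assms by simp
  moreover have "real (nat \<bar>j\<bar>) * \<alpha> = real_of_int j * \<alpha> \<or> real (nat \<bar>j\<bar>) * \<alpha> = - (real_of_int j * \<alpha>)"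
    by (cases "0 \<le> j") auto
  ultimately show ?thesis using Ints_minus by fastforce
qed

section \<open>The Fibonacci word codes the rotation by \<alpha>\<close>

definition fib_letter :: "nat \<Rightarrow> nat" where
  "fib_letter p = (if frac ((real p + 2) * \<alpha>) < \<alpha> then 1 else 0)"

lemma fib_letter_eq_floor_diff:
  "int (fib_letter p) = \<lfloor>(real p + 2) * \<alpha>\<rfloor> - \<lfloor>(real p + 1) * \<alpha>\<rfloor>"
proof -
  have "\<lfloor>\<alpha>\<rfloor> = 0" "frac \<alpha> = \<alpha>" using alpha_bounds by (simp_all add: floor_eq_iff frac_eq)
  moreover have "(real p + 2) * \<alpha> = (real p + 1) * \<alpha> + \<alpha>" by (simp add: algebra_simps)
  ultimately show ?thesis
    using frac_lt_1[of "(real p + 1) * \<alpha>"] frac_ge_0[of "(real p + 1) * \<alpha>"] alpha_bounds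
    by (auto simp: fib_letter_def floor_add frac_add simp del: frac_ge_0)
qed

lemma fib_letter_0_to_4:
  "fib_letter 0 = 0" "fib_letter 1 = 1" "fib_letter 2 = 0" "fib_letter 3 = 0" "fib_letter 4 = 1"
proof -
  have "\<lfloor>2 * \<alpha>\<rfloor> = 0" "\<lfloor>3 * \<alpha>\<rfloor> = 1" "\<lfloor>4 * \<alpha>\<rfloor> = 1" "\<lfloor>5 * \<alpha>\<rfloor> = 1"
    "\<lfloor>6 * \<alpha>\<rfloor> = 2"
    using alpha_bounds by (simp_all add: floor_eq_iff)
  moreover have "\<lfloor>\<alpha>\<rfloor> = 0" using alpha_bounds by (simp add: floor_eq_iff)
  ultimately show "fib_letter 0 = 0" "fib_letter 1 = 1" "fib_letter 2 = 0" "fib_letter 3 = 0"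
    "fib_letter 4 = 1"
    using fib_letter_eq_floor_diff[of 0] fib_letter_eq_floor_diff[of 1] fib_letter_eq_floor_diff[of 2]
      fib_letter_eq_floor_diff[of 3] fib_letter_eq_floor_diff[of 4]
    by simp_all
qed

lemma floor_add_fib_times_alpha:
  assumes "2 \<le> n" "0 < j" "j \<le> fib (n + 2) + 1"
  shows "\<lfloor>real (j + fib (n + 3)) * \<alpha>\<rfloor> = \<lfloor>real j * \<alpha>\<rfloor> + int (fib (n + 1))"
proof -
  define e where "e = (-\<beta>) ^ (n + 3)"
  have "fib 3 \<le> fib (n + 1)" by (rule fib_mono) (use assms(1) in simp)
  then have "j < fib (n + 4)" "j \<noteq> fib (n + 3)"
    using assms fib_add_4[of n] fib_add_3[of n] fib_add_3[of "n - 2"] by (simp_all add: numeral_eq_Suc)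
  moreover have "n + 1 + 3 = n + 4" "n + 1 + 2 = n + 3" "n + 1 + 1 = n + 2" by simp_all
  ultimately have "\<beta> ^ (n + 2) \<le> dist_int (real j * \<alpha>)"
    using dist_int_times_alpha_lower_bound[of j "n + 1"] assms(2) by metis
  moreover have "\<bar>e\<bar> = \<beta> ^ (n + 3)" using beta_pos by (simp add: e_def power_abs)
  moreover have "\<beta> ^ (n + 3) < \<beta> ^ (n + 2)" by (rule beta_power_strict_decreasing) simp
  ultimately have "\<lfloor>real j * \<alpha> + e\<rfloor> = \<lfloor>real j * \<alpha>\<rfloor>" by (intro floor_add_small) simp
  moreover have "real (j + fib (n + 3)) * \<alpha> = (real j * \<alpha> + e) + of_int (int (fib (n + 1)))"
    using fib_times_alpha[of "n + 1"] by (simp add: e_def algebra_simps)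
  ultimately show ?thesis by (simp only: floor_add_int[symmetric])
qed

lemma fib_letter_periodic:
  assumes "p < fib (n + 2)"
  shows "fib_letter (fib (n + 3) + p) = fib_letter p"
proof -
  consider "n = 0" | "n = 1" | "2 \<le> n" by linarith
  then show ?thesis
  proof cases
    case 1
    have "fib 3 = 2" by (simp add: numeral_eq_Suc)
    with 1 assms show ?thesis by (simp add: fib_letter_0_to_4)
  next
    case 2
    have "fib 3 = 2" "fib 4 = 3" by (simp_all add: numeral_eq_Suc)
    with 2 assms have "p < 2" by simp
    then consider "p = 0" | "p = Suc 0" by linarith
    then show ?thesis using 2 \<open>fib 4 = 3\<close> fib_letter_0_to_4 by cases simp_all
  next
    case 3
    have "\<lfloor>real (p + 1 + fib (n + 3)) * \<alpha>\<rfloor> = \<lfloor>real (p + 1) * \<alpha>\<rfloor> + int (fib (n + 1))"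
      "\<lfloor>real (p + 2 + fib (n + 3)) * \<alpha>\<rfloor> = \<lfloor>real (p + 2) * \<alpha>\<rfloor> + int (fib (n + 1))"
      by (rule floor_add_fib_times_alpha[OF 3]; use assms in simp)+
    then have "int (fib_letter (fib (n + 3) + p)) = int (fib_letter p)"
      unfolding fib_letter_eq_floor_diff by (simp add: algebra_simps)
    then show ?thesis by simp
  qed
qed

lemma fib_apply_append: "fib_apply (u @ v) = fib_apply u @ fib_apply v"
  by (simp add: fib_apply_def)

lemma funpow_fib_apply_append:
  "(fib_apply ^^ m) (u @ v) = (fib_apply ^^ m) u @ (fib_apply ^^ m) v"
  by (induction m) (simp_all add: fib_apply_append)

lemma fib_iter_Suc_Suc: "fib_iter (Suc (Suc n)) = fib_iter (Suc n) @ fib_iter n"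
proof -
  have "fib_iter (Suc (Suc n)) = (fib_apply ^^ Suc n) ([0] @ [1])"
    by (simp add: fib_iter_def funpow_Suc_right fib_apply_def del: funpow.simps)
  also have "\<dots> = fib_iter (Suc n) @ (fib_apply ^^ Suc n) [1]"
    by (simp only: funpow_fib_apply_append fib_iter_def)
  also have "(fib_apply ^^ Suc n) [1] = fib_iter n"
    by (simp add: fib_iter_def funpow_Suc_right fib_apply_def del: funpow.simps)
  finally show ?thesis .
qed

lemma fib_iter_eq_map_fib_letter: "fib_iter n = map fib_letter [0..<fib (n + 2)]"
proof (induction n rule: fib.induct)
  case 1
  show ?case by (simp add: fib_iter_def fib_letter_0_to_4)
next
  case 2
  have "fib_iter (Suc 0) = [0, 1]" by (simp add: fib_iter_def fib_apply_def)
  moreover have "[0..<fib (Suc 0 + 2)] = [0, 1]" by (simp add: numeral_eq_Suc upt_rec)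
  ultimately show ?case by (simp only: list.map fib_letter_0_to_4)
next
  case (3 n)
  have "map fib_letter [0..<fib (n + 2)] = map (fib_letter \<circ> (\<lambda>p. fib (n + 3) + p)) [0..<fib (n + 2)]"
    by (simp add: fib_letter_periodic)
  also have "\<dots> = map fib_letter (map (\<lambda>p. p + fib (n + 3)) [0..<fib (n + 2)])"
    by (simp add: add.commute)
  also have "\<dots> = map fib_letter [fib (n + 3)..<fib (n + 4)]"
    by (simp only: map_add_upt fib_add_4 add.commute)
  finally have "fib_iter (Suc (Suc n)) = map fib_letter ([0..<fib (n + 3)] @ [fib (n + 3)..<fib (n + 4)])"
    using "3.IH" by (simp add: fib_iter_Suc_Suc ac_simps)
  also have "[0..<fib (n + 3)] @ [fib (n + 3)..<fib (n + 4)] = [0..<fib (n + 4)]"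
    by (simp add: fib_add_4 upt_add_eq_append[symmetric])
  finally show ?case by (simp add: ac_simps)
qed

lemma fib_word_eq_fib_letter: "fib_word p = fib_letter p"
proof -
  have "p + 2 \<le> fib (Suc (p + 2))" by (rule le_fib_Suc)
  then show ?thesis by (simp add: fib_word_def fib_iter_eq_map_fib_letter)
qed

section \<open>Factors and arcs of the circle\<close>

lemma frac_add_int_times_alpha_inj:
  assumes "frac (c + real_of_int i * \<alpha>) = frac (c + real_of_int j * \<alpha>)"
  shows "i = j"
proof (rule ccontr)
  assume "i \<noteq> j"
  obtain m where "c + real_of_int i * \<alpha> = c + real_of_int j * \<alpha> + of_int m"
    using assms by (rule frac_eqE)
  then have "real_of_int (i - j) * \<alpha> = of_int m" by (simp add: algebra_simps)
  then show False using int_times_alpha_not_Int[of "i - j"] \<open>i \<noteq> j\<close> by simp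
qed

lemma frac_times_alpha_diff_pos:
  assumes "a \<noteq> b"
  shows "0 < frac ((real a - real b) * \<alpha>)"
  using int_times_alpha_not_Int[of "int a - int b"] assms by simp

lemma frac_diff_less_alpha_iff:
  assumes "0 \<le> y" "y < 1" "0 \<le> d" "d < 1"
  shows "frac (y - d) < \<alpha> \<longleftrightarrow> d \<le> y \<and> y < d + \<alpha> \<or> y < d + \<alpha> - 1"
proof (cases "d \<le> y")
  case True
  then have "frac (y - d) = y - d" using assms by (simp add: frac_eq)
  then show ?thesis using True alpha_bounds by auto
next
  case False
  then have "frac (y - d) = y - d + 1" using assms by (simp add: frac_unique_iff)
  then show ?thesis using False by auto
qed

lemma frac_frac_diff: "frac (frac x - frac y) = frac (x - y)"
  by (metis diff_conv_add_uminus frac_add_simps(1) frac_diff_simp)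

lemma fib_letter_add:
  "fib_letter (p + r) =
    (if frac (frac (real (p + 1 + a) * \<alpha>) - frac ((real a - real (r + 1)) * \<alpha>)) < \<alpha> then 1 else 0)"
proof -
  have "(real (p + r) + 2) * \<alpha> = real (p + 1 + a) * \<alpha> - (real a - real (r + 1)) * \<alpha>"
    by (simp add: algebra_simps)
  then show ?thesis
    by (simp only: fib_letter_def frac_frac_diff)
qed

(* Among the points -s\<alpha> mod 1 (s \<le> k), -b\<alpha> is the first one after -a\<alpha> in the positive
   direction; frac ((a - s)\<alpha>) is the distance from -a\<alpha> to -s\<alpha>. *)
definition next_point :: "nat \<Rightarrow> nat \<Rightarrow> nat \<Rightarrow> bool" where
  "next_point k a b \<longleftrightarrow> a \<le> k \<and> b \<le> k \<and> a \<noteq> b \<and>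
     (\<forall>s\<le>k. s \<noteq> a \<longrightarrow> frac ((real a - real b) * \<alpha>) \<le> frac ((real a - real s) * \<alpha>))"

lemma next_point_letters_agree:
  assumes np: "next_point k a b" and l: "l = frac ((real a - real b) * \<alpha>)"
    and y: "0 \<le> y" "y < l" and y': "0 \<le> y'" "y' < l" and r: "r < k"
  defines "d \<equiv> frac ((real a - real (r + 1)) * \<alpha>)"
  shows "frac (y - d) < \<alpha> \<longleftrightarrow> frac (y' - d) < \<alpha>"
proof -
  have cut: "frac ((real a - real s) * \<alpha>) = 0 \<or> l \<le> frac ((real a - real s) * \<alpha>)" if "s \<le> k" for s
    using np that unfolding next_point_def l by (cases "s = a") auto
  have d: "d = 0 \<or> l \<le> d" unfolding d_def using cut[of "r + 1"] r by simp
  have "frac (d + \<alpha>) = frac ((real a - real r) * \<alpha>)"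
    unfolding d_def by (simp add: algebra_simps)
  then have d': "frac (d + \<alpha>) = 0 \<or> l \<le> frac (d + \<alpha>)" using cut[of r] r by simp
  have "0 \<le> d" "d < 1" unfolding d_def by (simp_all add: frac_lt_1)
  have l1: "l < 1" unfolding l by (simp add: frac_lt_1)
  show ?thesis
  proof (cases "d = 0")
    case True
    then have "l \<le> \<alpha>" using d' alpha_bounds int_times_alpha_not_Int[of 1] by (simp add: frac_eq)
    then show ?thesis using True y y' l1 by (simp add: frac_eq)
  next
    case False
    have "d + \<alpha> - 1 \<le> 0 \<or> l \<le> d + \<alpha> - 1"
    proof (cases "d + \<alpha> < 1")
      case False
      then have "frac (d + \<alpha>) = d + \<alpha> - 1"
        using \<open>d < 1\<close> alpha_bounds by (simp add: frac_unique_iff)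
      then show ?thesis using d' by auto
    qed simp
    then show ?thesis
      using False d y y' l1 \<open>0 \<le> d\<close> \<open>d < 1\<close> by (auto simp: frac_diff_less_alpha_iff)
  qed
qed

lemma frac_small_multiples_alpha:
  "frac \<alpha> = \<alpha>" "frac (- \<alpha>) = 1 - \<alpha>" "frac (- (2 * \<alpha>)) = 1 - 2 * \<alpha>"
  using alpha_bounds by (simp_all add: frac_eq frac_unique_iff)

lemma next_point_gap_le_alpha:
  assumes k: "2 \<le> k" and np: "next_point k a b"
  shows "frac ((real a - real b) * \<alpha>) \<le> \<alpha>"
proof (cases "a = 0")
  case True
  then have "frac ((real a - real b) * \<alpha>) \<le> 1 - 2 * \<alpha>"
    using np k frac_small_multiples_alpha by (auto simp: next_point_def)
  then show ?thesis using alpha_bounds by simp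
next
  case False
  then have "a - 1 \<le> k" "a - 1 \<noteq> a" using np by (auto simp: next_point_def)
  then have "frac ((real a - real b) * \<alpha>) \<le> frac ((real a - real (a - 1)) * \<alpha>)"
    using np unfolding next_point_def by blast
  with False show ?thesis by (simp add: of_nat_diff frac_small_multiples_alpha)
qed

lemma next_point_agreeing_letters_bounds:
  assumes k: "2 \<le> k" and np: "next_point k a b" and l: "l = frac ((real a - real b) * \<alpha>)"
    and y: "l \<le> y" "y < 1" and y': "0 \<le> y'" "y' < l"
    and same: "\<And>r. r < k \<Longrightarrow> frac (y - frac ((real a - real (r + 1)) * \<alpha>)) < \<alpha> \<longleftrightarrow>
                              frac (y' - frac ((real a - real (r + 1)) * \<alpha>)) < \<alpha>"
  shows "1 \<le> a \<Longrightarrow> y < \<alpha>" and "a < k \<Longrightarrow> y < 1 - \<alpha>"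
    and "1 \<le> b \<Longrightarrow> l + \<alpha> \<le> y" and "b < k \<Longrightarrow> 1 + l - \<alpha> \<le> y"
    and "a = 0 \<Longrightarrow> \<not> (1 - 2 * \<alpha> \<le> y \<and> y < 1 - \<alpha>)"
proof -
  define d where "d r = frac ((real a - real (r + 1)) * \<alpha>)" for r
  have "0 \<le> d r" "d r < 1" for r unfolding d_def by (simp_all add: frac_lt_1)
  then have agree:
    "(d r \<le> y \<and> y < d r + \<alpha> \<or> y < d r + \<alpha> - 1) \<longleftrightarrow> (d r \<le> y' \<and> y' < d r + \<alpha> \<or> y' < d r + \<alpha> - 1)"
    if "r < k" for r
    using same[OF that] y y' by (simp add: d_def frac_diff_less_alpha_iff[symmetric])
  have "a \<le> k" "b \<le> k" "a \<noteq> b" using np by (simp_all add: next_point_def)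
  have "0 < l" unfolding l using \<open>a \<noteq> b\<close> by (rule frac_times_alpha_diff_pos)
  have "l \<le> \<alpha>" unfolding l using k np by (rule next_point_gap_le_alpha)
  note facts = y y' \<open>l \<le> \<alpha>\<close> alpha_bounds frac_small_multiples_alpha
  show "y < \<alpha>" if "1 \<le> a"
  proof -
    have "a - 1 < k" using that \<open>a \<le> k\<close> by simp
    then show ?thesis using agree[of "a - 1"] that facts by (simp add: d_def of_nat_diff)
  qed
  show "y < 1 - \<alpha>" if "a < k"
    using agree[of a] that facts by (simp add: d_def)
  show "l + \<alpha> \<le> y" if "1 \<le> b"
  proof -
    have "b - 1 < k" using that \<open>b \<le> k\<close> by simp
    then show ?thesis using agree[of "b - 1"] that facts by (simp add: d_def of_nat_diff l)
  qed
  show "1 + l - \<alpha> \<le> y" if "b < k"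
  proof -
    have "(real a - real (b + 1)) * \<alpha> = (real a - real b) * \<alpha> - \<alpha>"
      by (simp add: algebra_simps)
    then have "d b = frac (l - \<alpha>)"
      unfolding d_def l by (metis diff_conv_add_uminus frac_add_simps(1))
    moreover have "frac (l - \<alpha>) = (if l = \<alpha> then 0 else l - \<alpha> + 1)"
      using \<open>0 < l\<close> facts by (simp add: frac_unique_iff)
    ultimately show ?thesis using agree[of b] that facts by (auto split: if_splits)
  qed
  show "\<not> (1 - 2 * \<alpha> \<le> y \<and> y < 1 - \<alpha>)" if "a = 0"
  proof -
    have "l \<le> 1 - 2 * \<alpha>" using np k that frac_small_multiples_alpha by (auto simp: next_point_def l)
    then show ?thesis using agree[of 1] that k facts by (simp add: d_def)
  qed
qed

lemma next_point_letters_differ: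
  assumes k: "2 \<le> k" and np: "next_point k a b" and l: "l = frac ((real a - real b) * \<alpha>)"
    and y: "l \<le> y" "y < 1" and y': "0 \<le> y'" "y' < l"
  shows "\<exists>r<k. \<not> (frac (y - frac ((real a - real (r + 1)) * \<alpha>)) < \<alpha> \<longleftrightarrow>
                   frac (y' - frac ((real a - real (r + 1)) * \<alpha>)) < \<alpha>)"
proof (rule ccontr)
  assume "\<not> ?thesis"
  then have bounds: "1 \<le> a \<Longrightarrow> y < \<alpha>" "a < k \<Longrightarrow> y < 1 - \<alpha>"
    "1 \<le> b \<Longrightarrow> l + \<alpha> \<le> y" "b < k \<Longrightarrow> 1 + l - \<alpha> \<le> y"
    "a = 0 \<Longrightarrow> \<not> (1 - 2 * \<alpha> \<le> y \<and> y < 1 - \<alpha>)"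
    using next_point_agreeing_letters_bounds[OF k np l y y'] by blast+
  have "0 < l" unfolding l by (rule frac_times_alpha_diff_pos) (use np in \<open>simp add: next_point_def\<close>)
  have "l \<le> \<alpha>" unfolding l using k np by (rule next_point_gap_le_alpha)
  have "a \<le> k" "b \<le> k" "a \<noteq> b" using np by (simp_all add: next_point_def)
  then consider "1 \<le> a" "1 \<le> b" | "1 \<le> a" "b < k" | "a < k" "b < k" | "a = 0" "1 \<le> b" "a < k"
    using k by linarith
  then show False
  proof cases
    case 1
    then show False using bounds(1,3) \<open>0 < l\<close> by force
  next
    case 2
    then show False using bounds(1,4) \<open>l \<le> \<alpha>\<close> \<open>0 < l\<close> alpha_bounds by force
  next
    case 3
    then show False using bounds(2,4) \<open>0 < l\<close> by force
  next
    case 4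
    then show False using bounds(2,3,5) \<open>0 < l\<close> alpha_bounds by force
  qed
qed

lemma same_factor_iff_in_cell:
  assumes k: "2 \<le> k" and np: "next_point k a b"
    and p0: "frac (real (p0 + 1 + a) * \<alpha>) < frac ((real a - real b) * \<alpha>)"
  shows "(\<forall>r<k. fib_letter (p + r) = fib_letter (p0 + r)) \<longleftrightarrow>
    frac (real (p + 1 + a) * \<alpha>) < frac ((real a - real b) * \<alpha>)"
proof
  assume same: "\<forall>r<k. fib_letter (p + r) = fib_letter (p0 + r)"
  show "frac (real (p + 1 + a) * \<alpha>) < frac ((real a - real b) * \<alpha>)"
  proof (rule ccontr)
    assume "\<not> ?thesis"
    then have "frac ((real a - real b) * \<alpha>) \<le> frac (real (p + 1 + a) * \<alpha>)" by simp
    then obtain r where "r < k" and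
      "\<not> (frac (frac (real (p + 1 + a) * \<alpha>) - frac ((real a - real (r + 1)) * \<alpha>)) < \<alpha> \<longleftrightarrow>
         frac (frac (real (p0 + 1 + a) * \<alpha>) - frac ((real a - real (r + 1)) * \<alpha>)) < \<alpha>)"
      using next_point_letters_differ[OF k np refl _ frac_lt_1 frac_ge_0 p0] by blast
    then have "fib_letter (p + r) \<noteq> fib_letter (p0 + r)"
      by (simp add: fib_letter_add[of p r a] fib_letter_add[of p0 r a])
    with same \<open>r < k\<close> show False by blast
  qed
next
  assume "frac (real (p + 1 + a) * \<alpha>) < frac ((real a - real b) * \<alpha>)"
  with next_point_letters_agree[OF np refl _ _ frac_ge_0 p0]
  show "\<forall>r<k. fib_letter (p + r) = fib_letter (p0 + r)"
    by (simp add: fib_letter_add[of p _ a] fib_letter_add[of p0 _ a])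
qed

lemma next_point_exists:
  assumes "1 \<le> k"
  obtains a b where "next_point k a b"
    "frac (real (p + 1 + a) * \<alpha>) < frac ((real a - real b) * \<alpha>)"
proof -
  define x where "x s = frac (real (p + 1 + s) * \<alpha>)" for s
  obtain a where a: "a \<le> k" "\<And>s. s \<le> k \<Longrightarrow> x a \<le> x s"
    using ex_is_arg_min_if_finite[of "{..k}" x] by (auto simp: is_arg_min_linorder)
  obtain b where b: "b \<le> k" "\<And>s. s \<le> k \<Longrightarrow> x s \<le> x b"
    using ex_is_arg_min_if_finite[of "{..k}" "\<lambda>s. - x s"] by (auto simp: is_arg_min_linorder)
  have x_inj: "s = s'" if "x s = x s'" for s s'
    using that frac_add_int_times_alpha_inj[of 0 "int (p + 1 + s)" "int (p + 1 + s')"]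
    by (simp add: x_def)
  have dist: "frac ((real a - real s) * \<alpha>) = x a - x s + 1" if "s \<le> k" "s \<noteq> a" for s
  proof -
    have "x a < x s" using a(2)[OF that(1)] x_inj[of s a] that(2) by (auto simp: order_le_less)
    moreover have "(real a - real s) * \<alpha> = real (p + 1 + a) * \<alpha> - real (p + 1 + s) * \<alpha>"
      by (simp add: algebra_simps)
    ultimately show ?thesis by (simp add: x_def frac_diff_neg)
  qed
  have "a \<noteq> b"
  proof
    assume "a = b"
    then have "x 0 = x 1" using a b assms by (meson antisym order.trans zero_le)
    then show False using x_inj[of 0 1] by simp
  qed
  then have "next_point k a b" using a b dist by (auto simp: next_point_def)
  moreover have "x a < x a - x b + 1" using frac_lt_1[of "real (p + 1 + b) * \<alpha>"] by (simp add: x_def)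
  ultimately show ?thesis using that dist[of b] b \<open>a \<noteq> b\<close> by (simp add: x_def)
qed

lemma dist_int_le_frac_sign:
  assumes "\<sigma> = 1 \<or> \<sigma> = -1"
  shows "dist_int x \<le> frac (\<sigma> * x)"
proof (cases "x \<in> \<int>")
  case True
  then have "frac x = 0" by simp
  show ?thesis unfolding dist_int_def \<open>frac x = 0\<close> by simp
next
  case False
  with assms show ?thesis by (auto simp: dist_int_def frac_neg)
qed

lemma frac_sign_fib_times_alpha:
  assumes "\<sigma> = 1 \<or> \<sigma> = -1"
  shows "frac (\<sigma> * (real (fib (m + 2)) * \<alpha>)) =
    (if (\<sigma> = 1) = even m then \<beta> ^ (m + 2) else 1 - \<beta> ^ (m + 2))"
proof -
  have "real (fib (m + 2)) * \<alpha> \<notin> \<int>"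
    using frac_times_alpha_pos[of "fib (m + 2)"] by (simp add: fib_neq_0_nat)
  then show ?thesis
    using assms beta_power_pos[of "m + 2"] beta_power_less_1[of "m + 2"]
    by (auto simp: frac_fib_times_alpha frac_neg)
qed

lemma record_frac_times_alpha_is_fib:
  assumes \<sigma>: "\<sigma> = 1 \<or> \<sigma> = -1" and "0 < q"
    and least: "\<And>j. 0 < j \<Longrightarrow> j < q \<Longrightarrow> frac (\<sigma> * (real q * \<alpha>)) < frac (\<sigma> * (real j * \<alpha>))"
  shows "\<exists>n. q = fib (n + 2)"
proof (rule ccontr)
  assume not_fib: "\<nexists>n. q = fib (n + 2)"
  obtain n where n: "fib (n + 2) < q" "q < fib (n + 3)"
    using fib_bracket[OF \<open>0 < q\<close>] not_fib by (metis le_neq_implies_less)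
  then have "1 \<le> n" by (cases n) (simp_all add: numeral_eq_Suc)
  have "\<beta> ^ (n + 1) \<le> dist_int (real q * \<alpha>)"
    using dist_int_times_alpha_lower_bound[of q n] n \<open>0 < q\<close> by simp
  then have q_far: "\<beta> ^ (n + 1) \<le> frac (\<sigma> * (real q * \<alpha>))"
    using dist_int_le_frac_sign[OF \<sigma>, of "real q * \<alpha>"] by linarith
  \<comment> \<open>whichever of \<open>F\<^sub>n\<^sub>+\<^sub>1\<close>, \<open>F\<^sub>n\<^sub>+\<^sub>2\<close> has the right parity returns closer to an integer from the \<open>\<sigma>\<close> side\<close>
  obtain m where m: "m = n \<or> m = n - 1" "(\<sigma> = 1) = even m"
    using \<open>1 \<le> n\<close> by (cases "(\<sigma> = 1) = even n") (auto intro: that[of "n - 1"])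
  have "fib (m + 2) \<le> fib (n + 2)" by (rule fib_mono) (use m in auto)
  then have "frac (\<sigma> * (real q * \<alpha>)) < frac (\<sigma> * (real (fib (m + 2)) * \<alpha>))"
    using least[of "fib (m + 2)"] n by (simp add: fib_neq_0_nat)
  also have "\<dots> = \<beta> ^ (m + 2)" using frac_sign_fib_times_alpha[OF \<sigma>] m(2) by simp
  also have "\<dots> \<le> \<beta> ^ (n + 1)" by (rule beta_power_decreasing) (use m \<open>1 \<le> n\<close> in auto)
  finally show False using q_far by simp
qed

lemma next_point_diff_is_fib:
  assumes np: "next_point k a b"
  shows "\<exists>n. b = a + fib (n + 2) \<or> a = b + fib (n + 2)"
proof -
  have ab: "a \<le> k" "b \<le> k" "a \<noteq> b" using np by (simp_all add: next_point_def)
  have gap: "frac ((real a - real b) * \<alpha>) < frac ((real a - real s) * \<alpha>)"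
    if "s \<le> k" "s \<noteq> a" "s \<noteq> b" for s
  proof -
    have "frac ((real a - real b) * \<alpha>) \<noteq> frac ((real a - real s) * \<alpha>)"
      using frac_add_int_times_alpha_inj[of "real a * \<alpha>" "- int b" "- int s"] \<open>s \<noteq> b\<close>
      by (auto simp: algebra_simps)
    then show ?thesis using np that by (auto simp: next_point_def order_le_less)
  qed
  consider "a < b" | "b < a" using ab by linarith
  then show ?thesis
  proof cases
    case 1
    have "\<exists>n. b - a = fib (n + 2)"
    proof (rule record_frac_times_alpha_is_fib[of "-1"])
      fix j assume "0 < j" "j < b - a"
      then show "frac (- 1 * (real (b - a) * \<alpha>)) < frac (- 1 * (real j * \<alpha>))"
        using gap[of "a + j"] 1 ab by (simp add: of_nat_diff algebra_simps)
    qed (use 1 in simp_all)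
    with 1 show ?thesis by (metis le_add_diff_inverse less_imp_le)
  next
    case 2
    have "\<exists>n. a - b = fib (n + 2)"
    proof (rule record_frac_times_alpha_is_fib[of 1])
      fix j assume "0 < j" "j < a - b"
      then show "frac (1 * (real (a - b) * \<alpha>)) < frac (1 * (real j * \<alpha>))"
        using gap[of "a - j"] 2 ab by (simp add: of_nat_diff algebra_simps)
    qed (use 2 in simp_all)
    with 2 show ?thesis by (metis le_add_diff_inverse less_imp_le)
  qed
qed

section \<open>Floor sums over a Fibonacci period\<close>

lemma sum_floor_add_divide:
  assumes q: "0 < q"
  shows "(\<Sum>i<q. \<lfloor>x + real i / real q\<rfloor>) = \<lfloor>real q * x\<rfloor>"
proof -
  define N where "N = \<lfloor>real q * x\<rfloor>"
  define A where "A = N div int q"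
  define B where "B = N mod int q"
  have NAB: "N = int q * A + B" unfolding A_def B_def by simp
  have B: "0 \<le> B" "B < int q" unfolding B_def using q by auto
  have N: "real_of_int N \<le> real q * x" "real q * x < real_of_int N + 1" unfolding N_def by linarith+
  have summand: "\<lfloor>x + real i / real q\<rfloor> = A + (if int q \<le> int i + B then 1 else 0)" if "i < q" for i
  proof -
    define z where "z = A + (if int q \<le> int i + B then 1 else 0)"
    have "int q * z \<le> N + int i" "N + int i + 1 \<le> int q * (z + 1)"
      unfolding z_def NAB using B that by (auto simp: algebra_simps)
    then have "real_of_int (int q * z) \<le> real q * x + real i"
      "real q * x + real i < real_of_int (int q * (z + 1))"
      using N by linarith+
    then have "real_of_int z \<le> x + real i / real q" "x + real i / real q < real_of_int z + 1"
      using q by (simp_all add: field_simps)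
    then show ?thesis unfolding z_def by (simp add: floor_eq_iff)
  qed
  have "(\<Sum>i<q. \<lfloor>x + real i / real q\<rfloor>) = int q * A + (\<Sum>i<q. if int q \<le> int i + B then 1 else 0)"
    by (simp add: summand sum.distrib)
  also have "(\<Sum>i<q. if int q \<le> int i + B then 1 else 0 :: int) = int (card {q - nat B..<q})"
  proof -
    have "{..<q} \<inter> {i. int q \<le> int i + B} = {q - nat B..<q}" using B by auto
    then show ?thesis by (simp add: sum.If_cases)
  qed
  also have "int (card {q - nat B..<q}) = B" using B by simp
  finally show ?thesis using NAB N_def by simp
qed

lemma sum_mult_mod_reindex:
  fixes P q :: nat
  assumes "coprime P q"
  shows "(\<Sum>j<q. f (j * P mod q)) = (\<Sum>i<q. f i)"
proof (cases "q = 0")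
  case False
  have inj: "inj_on (\<lambda>j. j * P mod q) {..<q}"
  proof
    fix x y assume xy: "x \<in> {..<q}" "y \<in> {..<q}" "x * P mod q = y * P mod q"
    then have "[x = y] (mod q)"
      using cong_mult_rcancel_nat[OF assms] by (simp add: cong_def)
    then show "x = y" using xy cong_less_modulus_unique_nat by auto
  qed
  moreover have "(\<lambda>j. j * P mod q) ` {..<q} \<subseteq> {..<q}" using False by auto
  ultimately have "bij_betw (\<lambda>j. j * P mod q) {..<q} {..<q}"
    by (simp add: bij_betw_def endo_inj_surj)
  then show ?thesis by (rule sum.reindex_bij_betw)
qed simp

lemma sum_floor_add_coprime_fractions:
  fixes P q :: nat
  assumes "0 < q" "coprime P q"
  shows "(\<Sum>j<q. \<lfloor>w + real (j * P) / real q\<rfloor>) =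
    (\<Sum>j<q. \<lfloor>real (j * P) / real q\<rfloor>) + \<lfloor>real q * w\<rfloor>"
proof -
  have "\<lfloor>w + real (j * P) / real q\<rfloor> =
      \<lfloor>real (j * P) / real q\<rfloor> + \<lfloor>w + real (j * P mod q) / real q\<rfloor>" for j
  proof -
    have "real (j * P) / real q = real (j * P mod q) / real q + of_int (int (j * P div q))"
      using assms(1) by (simp add: field_simps flip: of_nat_mult of_nat_add)
    then show ?thesis
      by (simp only: floor_add_int[symmetric] add.assoc[symmetric] floor_divide_of_nat_eq) simp
  qed
  then have "(\<Sum>j<q. \<lfloor>w + real (j * P) / real q\<rfloor>) =
      (\<Sum>j<q. \<lfloor>real (j * P) / real q\<rfloor>) + (\<Sum>j<q. \<lfloor>w + real (j * P mod q) / real q\<rfloor>)"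
    by (simp add: sum.distrib)
  also have "(\<Sum>j<q. \<lfloor>w + real (j * P mod q) / real q\<rfloor>) = \<lfloor>real q * w\<rfloor>"
    using sum_mult_mod_reindex[OF assms(2), of "\<lambda>i. \<lfloor>w + real i / real q\<rfloor>"]
      sum_floor_add_divide[OF assms(1)] by simp
  finally show ?thesis .
qed

lemma coprime_fib_add_2: "coprime (fib n) (fib (n + 2))"
  using gcd_fib_add[of n 2] by (simp add: coprime_iff_gcd_eq_1 add.commute)

lemma fib_times_beta_power_le: "(real (fib m) - 1) * \<beta> ^ m \<le> 1 / 2"
proof -
  define \<phi> where "\<phi> = (1 + sqrt 5) / 2"
  have "\<phi> * \<beta> = 1" "(1 - sqrt 5) / 2 = - \<beta>"
    by (simp_all add: \<phi>_def \<beta>_def field_simps)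
  have "real (fib m) = (\<phi> ^ m - (- \<beta>) ^ m) / sqrt 5"
    using fib_closed_form[of m] by (simp only: \<phi>_def \<open>(1 - sqrt 5) / 2 = - \<beta>\<close>)
  then have "real (fib m) * \<beta> ^ m = (\<phi> ^ m * \<beta> ^ m - (- \<beta>) ^ m * \<beta> ^ m) / sqrt 5"
    by (simp add: left_diff_distrib)
  also have "\<dots> = ((\<phi> * \<beta>) ^ m - (- \<beta>\<^sup>2) ^ m) / sqrt 5"
    by (simp add: power2_eq_square flip: power_mult_distrib)
  also have "\<dots> \<le> (1 + \<beta> ^ m) / 2"
  proof (rule frac_le)
    have "0 \<le> 1 - \<beta>" "1 - \<beta> \<le> \<beta>" using sqrt5_bounds unfolding \<beta>_def by (simp_all add: field_simps)
    then have "\<bar>(- \<beta>\<^sup>2) ^ m\<bar> \<le> \<beta> ^ m" by (simp add: power_abs power_mono beta_square)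
    then have "- ((- \<beta>\<^sup>2) ^ m) \<le> \<beta> ^ m" by (metis abs_ge_minus_self order.trans)
    then show "0 \<le> 1 + \<beta> ^ m" "(\<phi> * \<beta>) ^ m - (- \<beta>\<^sup>2) ^ m \<le> 1 + \<beta> ^ m"
      using \<open>\<phi> * \<beta> = 1\<close> beta_power_pos[of m] by simp_all
    show "0 < (2::real)" "2 \<le> sqrt 5" using sqrt5_bounds by simp_all
  qed
  finally show ?thesis using beta_power_pos[of m] by (simp add: algebra_simps)
qed

lemma sum_floor_perturbed_coprime_fractions:
  fixes P q :: nat
  assumes "0 < q" "coprime P q" and c: "\<And>j. j < q \<Longrightarrow> lo \<le> c j \<and> c j \<le> hi"
  defines "K \<equiv> \<Sum>j<q. \<lfloor>real (j * P) / real q\<rfloor>"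
  shows "K + \<lfloor>real q * z + lo\<rfloor> \<le> (\<Sum>j<q. \<lfloor>z + (real (j * P) + c j) / real q\<rfloor>)"
    and "(\<Sum>j<q. \<lfloor>z + (real (j * P) + c j) / real q\<rfloor>) \<le> K + \<lfloor>real q * z + hi\<rfloor>"
proof -
  have shifted: "(\<Sum>j<q. \<lfloor>(z + t / real q) + real (j * P) / real q\<rfloor>) = K + \<lfloor>real q * z + t\<rfloor>" for t
  proof -
    have "real q * (z + t / real q) = real q * z + t" using assms(1) by (simp add: field_simps)
    then show ?thesis unfolding K_def using sum_floor_add_coprime_fractions[OF assms(1,2)] by simp
  qed
  have "\<lfloor>(z + lo / real q) + real (j * P) / real q\<rfloor> \<le> \<lfloor>z + (real (j * P) + c j) / real q\<rfloor> \<and>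
      \<lfloor>z + (real (j * P) + c j) / real q\<rfloor> \<le> \<lfloor>(z + hi / real q) + real (j * P) / real q\<rfloor>" if "j < q" for j
    using c[OF that] assms(1) by (intro conjI floor_mono) (simp_all add: add_divide_distrib divide_right_mono)
  then show "K + \<lfloor>real q * z + lo\<rfloor> \<le> (\<Sum>j<q. \<lfloor>z + (real (j * P) + c j) / real q\<rfloor>)"
    and "(\<Sum>j<q. \<lfloor>z + (real (j * P) + c j) / real q\<rfloor>) \<le> K + \<lfloor>real q * z + hi\<rfloor>"
    unfolding shifted[symmetric] by (auto intro: sum_mono)
qed

lemma fib_floor_sum_deviation:
  assumes q: "q = fib (n + 2)"
  shows "\<bar>(real_of_int (\<Sum>j<q. \<lfloor>z + real j * \<alpha>\<rfloor>) - real q * z) -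
          (real_of_int (\<Sum>j<q. \<lfloor>z' + real j * \<alpha>\<rfloor>) - real q * z')\<bar> < 3 / 2"
proof -
  define P where "P = fib n"
  define e where "e = (-\<beta>) ^ (n + 2)"
  define g where "g = (real q - 1) * \<beta> ^ (n + 2)"
  define lo where "lo = (if 0 \<le> e then 0 else - g)"
  define K where "K = (\<Sum>j<q. \<lfloor>real (j * P) / real q\<rfloor>)"
  have "0 < q" "coprime P q" using q by (simp_all add: fib_neq_0_nat P_def coprime_fib_add_2)
  have "real q * \<alpha> = real P + e" using fib_times_alpha[of n] by (simp add: q P_def e_def)
  then have j_alpha: "real j * \<alpha> = (real (j * P) + real j * e) / real q" for j
    using \<open>0 < q\<close> by (simp add: field_simps) (metis mult.assoc mult.commute distrib_left)
  have je: "\<bar>real j * e\<bar> \<le> g" if "j < q" for j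
  proof -
    have "real j \<le> real q - 1" using that by linarith
    then show ?thesis using beta_pos beta_power_pos[of "n + 2"]
      by (simp add: g_def e_def abs_mult power_abs mult_right_mono)
  qed
  have "lo \<le> real j * e \<and> real j * e \<le> lo + g" if "j < q" for j
    using je[OF that] by (cases "0 \<le> e") (auto simp: lo_def abs_le_iff mult_nonneg_nonpos)
  note sandwich = sum_floor_perturbed_coprime_fractions[where c = "\<lambda>j. real j * e",
      OF \<open>0 < q\<close> \<open>coprime P q\<close> this, folded K_def]
  have window: "K + lo - 1 < real_of_int (\<Sum>j<q. \<lfloor>w + real j * \<alpha>\<rfloor>) - real q * w \<and>
      real_of_int (\<Sum>j<q. \<lfloor>w + real j * \<alpha>\<rfloor>) - real q * w \<le> K + lo + g" for w
    using sandwich[where z = w] real_of_int_floor_add_one_gt[of "real q * w + lo"]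
      of_int_floor_le[of "real q * w + (lo + g)"]
    unfolding j_alpha by linarith
  have "g \<le> 1 / 2" unfolding g_def q by (rule fib_times_beta_power_le)
  then show ?thesis using window[of z] window[of z'] unfolding abs_less_iff by linarith
qed

lemma sum_diff_shift_swap:
  fixes f :: "nat \<Rightarrow> 'a::ab_group_add"
  shows "(\<Sum>j<m. f j - f (q + j)) = (\<Sum>j<q. f j - f (m + j))"
proof -
  have split: "(\<Sum>j<a + b. f j) = (\<Sum>j<a. f j) + (\<Sum>j<b. f (a + j))" for a b
    by (induction b) (simp_all add: add.assoc)
  have "(\<Sum>j<m. f j) + (\<Sum>j<q. f (m + j)) = (\<Sum>j<q. f j) + (\<Sum>j<m. f (q + j))"
    using split[of m q] split[of q m] by (simp add: add.commute)
  then show ?thesis by (simp add: sum_subtractf algebra_simps)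
qed

lemma floor_sum_fib_shift_diff_le_2:
  assumes q: "q = fib (n + 2)"
  shows "\<bar>(\<Sum>j<m. \<lfloor>real (u + j) * \<alpha>\<rfloor> - \<lfloor>real (u + q + j) * \<alpha>\<rfloor>) -
          (\<Sum>j<m. \<lfloor>real (u' + j) * \<alpha>\<rfloor> - \<lfloor>real (u' + q + j) * \<alpha>\<rfloor>)\<bar> \<le> 2"
proof -
  define W where "W z = real_of_int (\<Sum>j<q. \<lfloor>z + real j * \<alpha>\<rfloor>) - real q * z" for z
  have telescope: "(\<Sum>j<m. \<lfloor>real (v + j) * \<alpha>\<rfloor> - \<lfloor>real (v + q + j) * \<alpha>\<rfloor>) =
      W (real v * \<alpha>) - W (real (v + m) * \<alpha>) - real q * real m * \<alpha>" for v
  proof -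
    have "(\<Sum>j<m. \<lfloor>real (v + j) * \<alpha>\<rfloor> - \<lfloor>real (v + q + j) * \<alpha>\<rfloor>) =
        (\<Sum>j<q. \<lfloor>real (v + j) * \<alpha>\<rfloor> - \<lfloor>real (v + m + j) * \<alpha>\<rfloor>)"
      using sum_diff_shift_swap[of "\<lambda>j. \<lfloor>real (v + j) * \<alpha>\<rfloor>" m q] by (simp add: add.assoc)
    also have "\<dots> = (\<Sum>j<q. \<lfloor>real v * \<alpha> + real j * \<alpha>\<rfloor>) - (\<Sum>j<q. \<lfloor>real (v + m) * \<alpha> + real j * \<alpha>\<rfloor>)"
      by (simp add: sum_subtractf algebra_simps)
    finally have "real_of_int (\<Sum>j<m. \<lfloor>real (v + j) * \<alpha>\<rfloor> - \<lfloor>real (v + q + j) * \<alpha>\<rfloor>) =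
        real_of_int (\<Sum>j<q. \<lfloor>real v * \<alpha> + real j * \<alpha>\<rfloor>) -
        real_of_int (\<Sum>j<q. \<lfloor>real (v + m) * \<alpha> + real j * \<alpha>\<rfloor>)"
      by (simp only: of_int_diff[symmetric])
    then show ?thesis by (simp add: W_def algebra_simps)
  qed
  have "\<bar>W z - W z'\<bar> < 3 / 2" for z z'
    unfolding W_def using fib_floor_sum_deviation[OF q] .
  from this[of "real u * \<alpha>" "real u' * \<alpha>"] this[of "real (u + m) * \<alpha>" "real (u' + m) * \<alpha>"]
  have "\<bar>real_of_int ((\<Sum>j<m. \<lfloor>real (u + j) * \<alpha>\<rfloor> - \<lfloor>real (u + q + j) * \<alpha>\<rfloor>) -
          (\<Sum>j<m. \<lfloor>real (u' + j) * \<alpha>\<rfloor> - \<lfloor>real (u' + q + j) * \<alpha>\<rfloor>))\<bar> < 3"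
    unfolding of_int_diff telescope by linarith
  then show ?thesis by linarith
qed

lemma floor_sum_fib_gap_diff_le_2:
  assumes "b = a + fib (n + 2) \<or> a = b + fib (n + 2)"
  shows "\<bar>(\<Sum>j<m. \<lfloor>real (u + a + j) * \<alpha>\<rfloor> - \<lfloor>real (u + b + j) * \<alpha>\<rfloor>) -
          (\<Sum>j<m. \<lfloor>real (u' + a + j) * \<alpha>\<rfloor> - \<lfloor>real (u' + b + j) * \<alpha>\<rfloor>)\<bar> \<le> 2"
  using assms
proof (elim disjE)
  assume "b = a + fib (n + 2)"
  then show ?thesis
    using floor_sum_fib_shift_diff_le_2[OF refl, where m = m and u = "u + a" and u' = "u' + a"]
    by (simp add: ac_simps)
next
  assume "a = b + fib (n + 2)"
  then have "(\<Sum>j<m. \<lfloor>real (v + a + j) * \<alpha>\<rfloor> - \<lfloor>real (v + b + j) * \<alpha>\<rfloor>) =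
      - (\<Sum>j<m. \<lfloor>real (v + b + j) * \<alpha>\<rfloor> - \<lfloor>real (v + b + fib (n + 2) + j) * \<alpha>\<rfloor>)" for v
    by (simp add: sum_negf[symmetric] ac_simps)
  then show ?thesis
    using floor_sum_fib_shift_diff_le_2[OF refl, where m = m and u = "u + b" and u' = "u' + b"]
    by (simp only: minus_diff_minus abs_minus_cancel)
qed

section \<open>Occurrence counts and the upper bound\<close>

lemma indicator_frac_less_eq_floor_diff:
  assumes "0 < frac d"
  shows "(if frac y < frac d then 1 else 0 :: int) = \<lfloor>y\<rfloor> - \<lfloor>y - d\<rfloor> - \<lfloor>d\<rfloor>"
proof -
  have "y - d = (y - frac d) - of_int \<lfloor>d\<rfloor>" by (simp add: frac_def)
  then have shift: "\<lfloor>y - d\<rfloor> = \<lfloor>y - frac d\<rfloor> - \<lfloor>d\<rfloor>" by (metis floor_diff_of_int)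
  have "y = of_int \<lfloor>y\<rfloor> + frac y" by (simp add: frac_def)
  then have "\<lfloor>y - frac d\<rfloor> = (if frac y < frac d then \<lfloor>y\<rfloor> - 1 else \<lfloor>y\<rfloor>)"
    using assms frac_lt_1[of d] frac_lt_1[of y] frac_ge_0[of y] frac_ge_0[of d]
    by (subst floor_eq_iff) (auto simp del: frac_ge_0)
  then show ?thesis using shift by auto
qed

lemma card_frac_less_eq_floor_sum:
  assumes "0 < frac d"
  shows "int (card {j. j < m \<and> frac (y j) < frac d}) = (\<Sum>j<m. \<lfloor>y j\<rfloor> - \<lfloor>y j - d\<rfloor>) - int m * \<lfloor>d\<rfloor>"
proof -
  have "{j. j < m \<and> frac (y j) < frac d} = {j \<in> {..<m}. frac (y j) < frac d}" by auto
  then have "int (card {j. j < m \<and> frac (y j) < frac d}) = (\<Sum>j<m. if frac (y j) < frac d then 1 else 0)"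
    by (simp add: sum.inter_filter[symmetric])
  also have "\<dots> = (\<Sum>j<m. \<lfloor>y j\<rfloor> - \<lfloor>y j - d\<rfloor> - \<lfloor>d\<rfloor>)"
    by (simp add: indicator_frac_less_eq_floor_diff[OF assms])
  finally show ?thesis by (simp add: sum_subtractf)
qed

lemma map_upt_eq_iff:
  "length w = L \<Longrightarrow> map x [a..<a + L] = w \<longleftrightarrow> (\<forall>r<L. x (a + r) = w ! r)"
  by (auto simp: list_eq_iff_nth_eq)

lemma occ_factor:
  "occ w (factor x i n) = card {j. j < Suc n - length w \<and> (\<forall>r<length w. x (i + j + r) = w ! r)}"
proof -
  have "take (length w) (drop j (factor x i n)) = w \<longleftrightarrow> (\<forall>r<length w. x (i + j + r) = w ! r)"
    if "j + length w \<le> n" for j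
  proof -
    have "take (length w) (drop j (factor x i n)) = map x [i + j..<i + j + length w]"
      using that by (simp add: factor_def drop_map take_map drop_upt take_upt)
    then show ?thesis using map_upt_eq_iff[of w "length w" x "i + j"] by (simp add: add.assoc)
  qed
  moreover have "j + length w \<le> n \<longleftrightarrow> j < Suc n - length w" for j by linarith
  moreover have "length (factor x i n) = n" by (simp add: factor_def)
  ultimately show ?thesis unfolding occ_def by (metis (no_types, lifting))
qed

lemma factor_eq_iff: "factor x p k = w \<longleftrightarrow> length w = k \<and> (\<forall>r<k. x (p + r) = w ! r)"
  using map_upt_eq_iff[of w k x p] by (auto simp: factor_def)

lemma occ_factor_fib_word_eq_card_cell:
  assumes k: "2 \<le> k" and np: "next_point k a b"
    and p\<^sub>0: "frac (real (p\<^sub>0 + 1 + a) * \<alpha>) < frac ((real a - real b) * \<alpha>)"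
  shows "occ (factor fib_word p\<^sub>0 k) (factor fib_word v n) =
    card {j. j < Suc n - k \<and> frac (real (v + j + 1 + a) * \<alpha>) < frac ((real a - real b) * \<alpha>)}"
proof -
  have "(\<forall>r<k. fib_word (v + j + r) = factor fib_word p\<^sub>0 k ! r) \<longleftrightarrow>
      frac (real (v + j + 1 + a) * \<alpha>) < frac ((real a - real b) * \<alpha>)" for j
    using same_factor_iff_in_cell[OF k np p\<^sub>0, of "v + j"] by (simp add: factor_def fib_word_eq_fib_letter)
  then show ?thesis unfolding occ_factor by (simp add: factor_def)
qed

lemma fib_word_occ_diff_le_2:
  assumes k: "2 \<le> k" and w: "length w = k"
  shows "\<bar>int (occ w (factor fib_word i n)) - int (occ w (factor fib_word i' n))\<bar> \<le> 2"
proof (cases "\<exists>p\<^sub>0. factor fib_word p\<^sub>0 k = w")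
  case False
  then have "\<not> (\<forall>r<k. fib_word (v + j + r) = w ! r)" for v j
    using w by (auto simp: factor_eq_iff)
  then have "occ w (factor fib_word v n) = 0" for v
    using w by (simp add: occ_factor)
  then show ?thesis by simp
next
  case True
  then obtain p\<^sub>0 where w_eq: "w = factor fib_word p\<^sub>0 k" by blast
  obtain a b where np: "next_point k a b"
    and p\<^sub>0: "frac (real (p\<^sub>0 + 1 + a) * \<alpha>) < frac ((real a - real b) * \<alpha>)"
    using next_point_exists[of k p\<^sub>0] k by auto
  define m where "m = Suc n - k"
  define d where "d = (real a - real b) * \<alpha>"
  have "0 < frac d" using np frac_times_alpha_diff_pos by (simp add: d_def next_point_def)
  then have count: "int (occ w (factor fib_word v n)) =
      (\<Sum>j<m. \<lfloor>real (v + 1 + a + j) * \<alpha>\<rfloor> - \<lfloor>real (v + 1 + b + j) * \<alpha>\<rfloor>) - int m * \<lfloor>d\<rfloor>" for v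
    using card_frac_less_eq_floor_sum[of d m "\<lambda>j. real (v + 1 + a + j) * \<alpha>"]
      occ_factor_fib_word_eq_card_cell[OF k np p\<^sub>0, of v n]
    by (simp add: w_eq m_def d_def algebra_simps)
  obtain n' where "b = a + fib (n' + 2) \<or> a = b + fib (n' + 2)"
    using next_point_diff_is_fib[OF np] by blast
  from floor_sum_fib_gap_diff_le_2[OF this, where m = m and u = "i + 1" and u' = "i' + 1"]
  show ?thesis using count[of i] count[of i'] by linarith
qed

lemma fib_word_balanced_2:
  assumes "2 \<le> k"
  shows "balanced {0, 1} fib_word k 2"
  using fib_word_occ_diff_le_2[OF assms] by (auto simp: balanced_def)

section \<open>The lower bound\<close>

lemma odd_fib_bracket:
  assumes "2 \<le> k"
  obtains n where "odd n" "fib (n + 2) \<le> k" "k < fib (n + 4)"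
proof -
  obtain m where m: "fib (m + 2) \<le> k" "k < fib (m + 3)" using fib_bracket[of k] assms by auto
  show ?thesis
  proof (cases "odd m")
    case True
    have "fib (m + 3) \<le> fib (m + 4)" by (rule fib_mono) simp
    with True m show ?thesis using that by simp
  next
    case False
    have "m \<noteq> 0"
    proof
      assume "m = 0"
      then show False using m(2) assms by (simp add: numeral_eq_Suc)
    qed
    then have "odd (m - 1)" "m - 1 + 2 = m + 1" "m - 1 + 4 = m + 3" using False by (cases m; simp)+
    moreover have "fib (m + 1) \<le> fib (m + 2)" by (rule fib_mono) simp
    ultimately show ?thesis using that[of "m - 1"] m by (simp add: ac_simps)
  qed
qed

lemma next_point_0_fib:
  assumes n: "odd n" "fib (n + 2) \<le> k" "k < fib (n + 4)"
  shows "next_point k 0 (fib (n + 2))"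
proof -
  have l: "frac (- (real (fib (n + 2)) * \<alpha>)) = \<beta> ^ (n + 2)"
    using frac_sign_fib_times_alpha[of "-1" n] n(1) by simp
  have "\<beta> ^ (n + 2) \<le> 1 - frac (real s * \<alpha>)" if "s \<le> k" "s \<noteq> 0" for s
  proof (cases "s = fib (n + 3)")
    case True
    have "frac (real (fib (n + 1 + 2)) * \<alpha>) = \<beta> ^ (n + 3)"
      using frac_fib_times_alpha[of "n + 1"] n(1) by (simp add: ac_simps)
    moreover have "\<beta> ^ (n + 2) + \<beta> ^ (n + 3) \<le> 1"
      using beta_power_add_2[of "n + 1"] beta_power_less_1[of "n + 1"] by (simp add: numeral_eq_Suc)
    ultimately show ?thesis using True by (simp add: ac_simps)
  next
    case False
    have shift: "n + 1 + 1 = n + 2" "n + 1 + 2 = n + 3" "n + 1 + 3 = n + 4" by simp_all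
    have "s < fib (n + 4)" using that n by simp
    then have "\<beta> ^ (n + 2) \<le> dist_int (real s * \<alpha>)"
      using dist_int_times_alpha_lower_bound[of s "n + 1", unfolded shift] that(2) False by simp
    then show ?thesis by (simp add: le_dist_int_iff)
  qed
  moreover have "frac (- (real s * \<alpha>)) = 1 - frac (real s * \<alpha>)" if "s \<noteq> 0" for s
    using frac_times_alpha_pos[of s] that by (simp add: frac_neg)
  ultimately show ?thesis
    using n fib_neq_0_nat[of "n + 2"] unfolding next_point_def by (simp add: l)
qed

lemma fib_times_alpha_odd:
  assumes "odd n"
  shows "real (fib (n + 3)) * \<alpha> = real (fib (n + 1)) + \<beta> ^ (n + 3)"
    and "real (fib (n + 5)) * \<alpha> = real (fib (n + 3)) + \<beta> ^ (n + 5)"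
  using fib_times_alpha[of "n + 1"] fib_times_alpha[of "n + 3"] assms by (simp_all add: ac_simps)

lemma frac_fib_add_times_alpha_ge:
  assumes n: "odd n" and t: "0 < t" "t \<le> fib (n + 3) + 1"
  shows "\<beta> ^ (n + 2) \<le> frac (real (fib (n + 3) + t) * \<alpha>)"
proof -
  have sum: "real (fib (n + 3) + t) * \<alpha> = (real t * \<alpha> + \<beta> ^ (n + 3)) + real (fib (n + 1))"
    using fib_times_alpha_odd(1)[OF n] by (simp add: algebra_simps)
  have "\<beta> ^ (n + 3) < \<beta> ^ (n + 2)" by (rule beta_power_strict_decreasing) simp
  show ?thesis
  proof (cases "t = fib (n + 3)")
    case True
    have "\<beta> ^ (n + 3) \<le> \<beta>\<^sup>2" by (rule beta_power_decreasing) simp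
    then have "frac (real (fib (n + 3) + t) * \<alpha>) = 2 * \<beta> ^ (n + 3)"
      using True fib_times_alpha_odd(1)[OF n] alpha_bounds beta_power_pos[of "n + 3"]
      by (simp add: frac_unique_iff alpha_eq_beta_square algebra_simps)
    moreover have "\<beta> ^ (n + 3) = \<beta> * \<beta> ^ (n + 2)" by (simp add: numeral_eq_Suc)
    moreover have "1 \<le> 2 * \<beta>" using sqrt5_bounds by (simp add: \<beta>_def)
    ultimately show ?thesis using beta_power_pos[of "n + 2"] by (simp add: mult_left_mono)
  next
    case False
    have "fib 3 \<le> fib (n + 2)" by (rule fib_mono) (use n in \<open>cases n; simp\<close>)
    then have "t < fib (n + 4)" using t fib_add_4[of n] by (simp add: numeral_eq_Suc)
    have shift: "n + 1 + 1 = n + 2" "n + 1 + 2 = n + 3" "n + 1 + 3 = n + 4" by simp_all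
    have far: "\<beta> ^ (n + 2) \<le> dist_int (real t * \<alpha>)"
      using dist_int_times_alpha_lower_bound[of t "n + 1", unfolded shift] t(1) False \<open>t < fib (n + 4)\<close>
      by simp
    have "frac (real (fib (n + 3) + t) * \<alpha>) = frac (real t * \<alpha>) + \<beta> ^ (n + 3)"
      unfolding sum frac_add_int_right[OF Ints_of_nat]
      using far \<open>\<beta> ^ (n + 3) < _\<close> beta_power_pos[of "n + 3"] by (intro frac_add_small) simp
    then show ?thesis using far beta_power_pos[of "n + 3"] by (simp add: le_dist_int_iff)
  qed
qed

lemma frac_fib_add_5_times_alpha_less:
  assumes "odd n"
  shows "frac (real (fib (n + 5)) * \<alpha>) < \<beta> ^ (n + 2)"
    and "frac (real (fib (n + 5) + fib (n + 3)) * \<alpha>) < \<beta> ^ (n + 2)"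
proof -
  have "\<beta> ^ (n + 3) + \<beta> ^ (n + 4) = \<beta> ^ (n + 2)"
    using beta_power_add_2[of "n + 2"] by (simp add: numeral_eq_Suc)
  moreover have "\<beta> ^ (n + 5) < \<beta> ^ (n + 4)" by (rule beta_power_strict_decreasing) simp
  ultimately have small: "\<beta> ^ (n + 5) + \<beta> ^ (n + 3) < \<beta> ^ (n + 2)" by simp
  note pos = beta_power_pos[of "n + 3"] beta_power_pos[of "n + 5"] beta_power_less_1[of "n + 2"]
  have "frac (real (fib (n + 5)) * \<alpha>) = \<beta> ^ (n + 5)"
    using fib_times_alpha_odd(2)[OF assms] small pos by (simp add: frac_unique_iff)
  then show "frac (real (fib (n + 5)) * \<alpha>) < \<beta> ^ (n + 2)" using small pos by simp
  have "real (fib (n + 5) + fib (n + 3)) * \<alpha> = (\<beta> ^ (n + 5) + \<beta> ^ (n + 3)) + real (fib (n + 3) + fib (n + 1))"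
    using fib_times_alpha_odd[OF assms] by (simp add: algebra_simps)
  then have "frac (real (fib (n + 5) + fib (n + 3)) * \<alpha>) = \<beta> ^ (n + 5) + \<beta> ^ (n + 3)"
    using small pos by (simp add: frac_unique_iff)
  then show "frac (real (fib (n + 5) + fib (n + 3)) * \<alpha>) < \<beta> ^ (n + 2)" using small by simp
qed

lemma fib_word_not_balanced_1:
  assumes k: "2 \<le> k"
  shows "\<not> balanced {0, 1} fib_word k 1"
proof
  assume bal: "balanced {0, 1} fib_word k 1"
  obtain n where n: "odd n" "fib (n + 2) \<le> k" "k < fib (n + 4)"
    using odd_fib_bracket[OF k] by blast
  define l where "l = \<beta> ^ (n + 2)"
  define p\<^sub>0 where "p\<^sub>0 = fib (n + 5) - 1"
  define w where "w = factor fib_word p\<^sub>0 k"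
  define N where "N = fib (n + 3) + k"
  have "p\<^sub>0 + 0 + 1 = fib (n + 5)" "p\<^sub>0 + fib (n + 3) + 1 = fib (n + 5) + fib (n + 3)"
    using fib_neq_0_nat[of "n + 5"] by (simp_all add: p\<^sub>0_def)
  then have hits: "frac (real (p\<^sub>0 + 0 + 1) * \<alpha>) < l" "frac (real (p\<^sub>0 + fib (n + 3) + 1) * \<alpha>) < l"
    using frac_fib_add_5_times_alpha_less[OF n(1)] unfolding l_def by metis+
  have "frac ((real 0 - real (fib (n + 2))) * \<alpha>) = l"
    using frac_sign_fib_times_alpha[of "-1" n] n(1) by (simp add: l_def)
  then have occ: "occ w (factor fib_word v N) =
      card {j. j < fib (n + 3) + 1 \<and> frac (real (v + j + 1) * \<alpha>) < l}" for v
    using occ_factor_fib_word_eq_card_cell[OF k next_point_0_fib[OF n], of p\<^sub>0 v N] hits(1)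
    by (simp add: w_def N_def)
  have "{0, fib (n + 3)} \<subseteq> {j. j < fib (n + 3) + 1 \<and> frac (real (p\<^sub>0 + j + 1) * \<alpha>) < l}"
    using hits by auto
  then have "card {0, fib (n + 3)} \<le> occ w (factor fib_word p\<^sub>0 N)"
    unfolding occ by (rule card_mono[rotated]) simp
  moreover have "card {0, fib (n + 3)} = 2" using fib_neq_0_nat[of "n + 3"] by simp
  moreover have "occ w (factor fib_word (fib (n + 3)) N) = 0"
  proof -
    have "\<not> frac (real (fib (n + 3) + j + 1) * \<alpha>) < l" if "j < fib (n + 3) + 1" for j
      using frac_fib_add_times_alpha_ge[OF n(1), of "j + 1"] that by (simp add: l_def add.assoc)
    then show ?thesis by (simp add: occ)
  qed
  moreover have "length w = k" "set w \<subseteq> {0, 1}"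
    by (auto simp: w_def factor_def fib_word_eq_fib_letter fib_letter_def)
  then have "\<bar>int (occ w (factor fib_word p\<^sub>0 N)) - int (occ w (factor fib_word (fib (n + 3)) N))\<bar> \<le> 1"
    using bal unfolding balanced_def by (metis of_nat_1)
  ultimately show False by linarith
qed

theorem theorem14:
  fixes k :: nat
  assumes "k \<ge> 2"
  shows "(LEAST C::nat. C \<ge> 1 \<and> balanced {0, 1} fib_word k C) = 2"
proof (rule Least_equality)
  show "1 \<le> (2::nat) \<and> balanced {0, 1} fib_word k 2"
    using fib_word_balanced_2[OF assms] by simp
next
  fix C :: nat
  assume C: "1 \<le> C \<and> balanced {0, 1} fib_word k C"
  show "2 \<le> C"
  proof (rule ccontr)
    assume "\<not> 2 \<le> C"
    with C have "C = 1" by simp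
    with C fib_word_not_balanced_1[OF assms] show False by simp
  qed
qed

end
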